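(* Let $R$ be a commutative ring which is free as an abelian group with $\mathbb{Z}$-basis $V=\{v_k\}_{k\in I}$, let $n\ge2$, $p$ a prime and $r\ge1$. For $1\le i,j\le n$ with $i+j<2n$ and $k\in I$ define $$A_{ij,k,r}=\begin{cases}1+p^rv_ke_{ij}&i\ne j,\\ 1+p^rv_k(e_{ii}-e_{nn})&i=j.\end{cases}$$ Regard $\Gamma(SL_n(R),p^r)/\Gamma(SL_n(R),p^{r+1})$ as the subgroup of $SL_n(R/p^{r+1}R)$ given by the kernel of the reduction map $SL_n(R/p^{r+1}R)\to SL_n(R/p^rR)$ (to which it is isomorphic via reduction mod $p^{r+1}$). Then this group is generated by the reductions mod $p^{r+1}$ of the matrices $A_{ij,k,r}$.
   Context: $\Gamma(SL_n(R),p^m)=\ker\big(SL_n(R)\to SL_n(R/p^mR)\big)$; $1$ is the $n\times n$ identity matrix and $e_{ij}$ is the $n\times n$ matrix with $1$ in position $(i,j)$ and zeros elsewhere. (Note $\det A_{ii,k,r}=1-p^{2r}v_k^2\equiv1\pmod{p^{r+1}}$, so the reductions lie in $SL_n(R/p^{r+1}R)$.) *)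

theory Defs
  imports "Jordan_Normal_Form.Determinant" "HOL-Algebra.Generated_Groups" "HOL-Algebra.Coset"
    "HOL-Computational_Algebra.Primes"
begin

definition Z_basis :: "'i set \<Rightarrow> ('i \<Rightarrow> 'a::comm_ring_1) \<Rightarrow> bool" where
  "Z_basis I v \<longleftrightarrow> (\<forall>x::'a. \<exists>!c::'i \<Rightarrow> int.
      finite {k. c k \<noteq> 0} \<and> {k. c k \<noteq> 0} \<subseteq> I \<and>
      x = (\<Sum>k\<in>{k. c k \<noteq> 0}. of_int (c k) * v k))"

definition cong_mat :: "'a::comm_ring_1 \<Rightarrow> 'a mat \<Rightarrow> 'a mat \<Rightarrow> bool" where
  "cong_mat q M N \<longleftrightarrow> dim_row M = dim_row N \<and> dim_col M = dim_col N \<and>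
     (\<forall>i<dim_row M. \<forall>j<dim_col M. q dvd (M $$ (i,j) - N $$ (i,j)))"

text \<open>An n x n matrix over R/qR, represented as the class of its lifts to R.\<close>
definition mat_class :: "nat \<Rightarrow> 'a::comm_ring_1 \<Rightarrow> 'a mat \<Rightarrow> 'a mat set" where
  "mat_class n q M = {N \<in> carrier_mat n n. cong_mat q M N}"

text \<open>The group SL_n(R/qR): classes of n x n matrices over R with determinant
  congruent to 1 modulo q, with multiplication induced from R.\<close>
definition SL_mod :: "nat \<Rightarrow> 'a::comm_ring_1 \<Rightarrow> 'a mat set monoid" where
  "SL_mod n q = \<lparr> carrier = {mat_class n q M | M. M \<in> carrier_mat n n \<and> q dvd (det M - 1)},
      mult = (\<lambda>X Y. mat_class n q ((SOME M. M \<in> X) * (SOME N. N \<in> Y))),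
      one = mat_class n q (1\<^sub>m n) \<rparr>"

text \<open>Reduction map SL_n(R/qR) -> SL_n(R/q'R) (for q' dividing q).\<close>
definition reduce_mod :: "nat \<Rightarrow> 'a::comm_ring_1 \<Rightarrow> 'a mat set \<Rightarrow> 'a mat set" where
  "reduce_mod n q' X = mat_class n q' (SOME M. M \<in> X)"

definition elem_mat :: "nat \<Rightarrow> nat \<Rightarrow> nat \<Rightarrow> 'a::comm_ring_1 mat" where
  "elem_mat n i j = mat n n (\<lambda>(a,b). if a = i \<and> b = j then 1 else 0)"

text \<open>A_{ij,k,r} with x = v_k; indices 0-based, so the paper's index n is n-1.\<close>
definition A_mat :: "nat \<Rightarrow> nat \<Rightarrow> nat \<Rightarrow> 'a::comm_ring_1 \<Rightarrow> nat \<Rightarrow> nat \<Rightarrow> 'a mat" where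
  "A_mat n p r x i j =
     1\<^sub>m n + (of_nat p ^ r * x) \<cdot>\<^sub>m
       (if i \<noteq> j then elem_mat n i j else elem_mat n i i - elem_mat n (n-1) (n-1))"

end

theory Submission
  imports Defs
begin

text \<open>Write P = p^r and q = p^(r+1). An element of the kernel is the class of a matrix
  1 + P Y, and since q divides P^2 the map Y \<mapsto> 1 + P Y is additive modulo q. The
  matrices e_ij (i \<noteq> j) and e_ii - e_nn span the trace-zero matrices over R, hence over
  the Z-basis v, so their lifts generate the lifts of all trace-zero Y. For a general Y in the
  kernel, splitting off the multiple t e_nn of e_nn with t the trace of Y leaves a trace-zero
  part, and the determinant condition det (1 + P Y) \<equiv> 1 forces P t \<equiv> 0 modulo q, so the
  factor 1 + P t e_nn is trivial.\<close>

subsection \<open>Entrywise congruence of matrices\<close>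

lemma cong_mat_refl: "cong_mat q M M"
  by (simp add: cong_mat_def)

lemma cong_mat_sym: "cong_mat q M N \<Longrightarrow> cong_mat q N M"
  unfolding cong_mat_def by (metis dvd_minus_iff minus_diff_eq)

lemma cong_mat_trans: "cong_mat q M N \<Longrightarrow> cong_mat q N K \<Longrightarrow> cong_mat q M K"
  unfolding cong_mat_def
proof (intro conjI allI impI, simp_all, goal_cases)
  case (1 i j)
  then have "q dvd (M $$ (i,j) - N $$ (i,j)) + (N $$ (i,j) - K $$ (i,j))"
    by (intro dvd_add) auto
  then show ?case by simp
qed

lemma cong_mat_dvd: "q' dvd q \<Longrightarrow> cong_mat q M N \<Longrightarrow> cong_mat q' M N"
  unfolding cong_mat_def using dvd_trans by blast

lemma cong_mat_add_smult:
  assumes "A \<in> carrier_mat n n" "B \<in> carrier_mat n n" "q dvd c"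
  shows "cong_mat q (A + c \<cdot>\<^sub>m B) A"
  using assms unfolding cong_mat_def by auto

lemma dvd_prod_diff:
  fixes q :: "'a::comm_ring_1"
  assumes "finite S" "\<And>i. i \<in> S \<Longrightarrow> q dvd f i - g i"
  shows "q dvd prod f S - prod g S"
  using assms
proof (induction S rule: finite_induct)
  case (insert a F)
  have "prod f (insert a F) - prod g (insert a F) =
      f a * (prod f F - prod g F) + (f a - g a) * prod g F"
    using insert by (simp add: algebra_simps)
  then show ?case using insert by (auto intro: dvd_add dvd_mult dvd_mult2)
qed simp

lemma cong_mat_det:
  assumes "A \<in> carrier_mat n n" "B \<in> carrier_mat n n" "cong_mat q A B"
  shows "q dvd det A - det B"
proof -
  have "det A - det B = (\<Sum>p\<in>{p. p permutes {0..<n}}.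
      signof p * ((\<Prod>i = 0..<n. A $$ (i, p i)) - (\<Prod>i = 0..<n. B $$ (i, p i))))"
    using assms by (simp add: det_def sum_subtractf algebra_simps)
  also have "q dvd \<dots>"
  proof (intro dvd_sum dvd_mult dvd_prod_diff)
    fix p i assume "p \<in> {p. p permutes {0..<n}}" and i: "i \<in> {0..<n}"
    then have "p i < n" by (auto simp: permutes_in_image)
    then show "q dvd A $$ (i, p i) - B $$ (i, p i)" using assms i unfolding cong_mat_def by auto
  qed auto
  finally show ?thesis .
qed

lemma cong_mat_mult:
  assumes "A \<in> carrier_mat n m" "A' \<in> carrier_mat n m" "B \<in> carrier_mat m k" "B' \<in> carrier_mat m k"
    and "cong_mat q A A'" "cong_mat q B B'"
  shows "cong_mat q (A * B) (A' * B')"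
  unfolding cong_mat_def
proof (intro conjI allI impI)
  fix i j assume "i < dim_row (A * B)" and "j < dim_col (A * B)"
  then have ij: "i < n" "j < k" using assms by auto
  have "(A * B) $$ (i,j) - (A' * B') $$ (i,j) =
      (\<Sum>l = 0..<m. A $$ (i,l) * (B $$ (l,j) - B' $$ (l,j)) + (A $$ (i,l) - A' $$ (i,l)) * B' $$ (l,j))"
    using assms ij by (simp add: scalar_prod_def sum_subtractf[symmetric] algebra_simps)
  also have "q dvd \<dots>"
    using assms ij unfolding cong_mat_def by (intro dvd_sum dvd_add dvd_mult dvd_mult2) auto
  finally show "q dvd (A * B) $$ (i,j) - (A' * B') $$ (i,j)" .
qed (use assms in auto)

subsection \<open>The monoid SL_mod and the reduction kernel\<close>

lemma mat_class_eq_iff: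
  assumes "M \<in> carrier_mat n n" "N \<in> carrier_mat n n"
  shows "mat_class n q M = mat_class n q N \<longleftrightarrow> cong_mat q M N"
proof
  assume "mat_class n q M = mat_class n q N"
  then have "N \<in> mat_class n q M" using assms by (simp add: mat_class_def cong_mat_refl)
  then show "cong_mat q M N" by (simp add: mat_class_def)
next
  assume "cong_mat q M N"
  then show "mat_class n q M = mat_class n q N"
    unfolding mat_class_def using cong_mat_sym cong_mat_trans by blast
qed

lemma some_in_mat_class:
  assumes "M \<in> carrier_mat n n"
  shows "(SOME N. N \<in> mat_class n q M) \<in> carrier_mat n n"
    and "cong_mat q M (SOME N. N \<in> mat_class n q M)"
proof -
  have "M \<in> mat_class n q M" using assms by (simp add: mat_class_def cong_mat_refl)
  then have "(SOME N. N \<in> mat_class n q M) \<in> mat_class n q M" by (rule someI)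
  then show "(SOME N. N \<in> mat_class n q M) \<in> carrier_mat n n"
    and "cong_mat q M (SOME N. N \<in> mat_class n q M)"
    by (simp_all add: mat_class_def)
qed

lemma SL_mod_mult_class:
  assumes "A \<in> carrier_mat n n" "B \<in> carrier_mat n n"
  shows "mat_class n q A \<otimes>\<^bsub>SL_mod n q\<^esub> mat_class n q B = mat_class n q (A * B)"
proof -
  let ?A = "SOME N. N \<in> mat_class n q A" and ?B = "SOME N. N \<in> mat_class n q B"
  have a: "?A \<in> carrier_mat n n" "cong_mat q ?A A"
    using some_in_mat_class[OF assms(1), where q = q] by (auto intro: cong_mat_sym)
  have b: "?B \<in> carrier_mat n n" "cong_mat q ?B B"
    using some_in_mat_class[OF assms(2), where q = q] by (auto intro: cong_mat_sym)
  have "cong_mat q (?A * ?B) (A * B)"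
    using cong_mat_mult[OF a(1) assms(1) b(1) assms(2) a(2) b(2)] .
  then show ?thesis
    using a b assms by (simp add: SL_mod_def mat_class_eq_iff)
qed

lemma SL_mod_carrier_iff:
  "X \<in> carrier (SL_mod n q) \<longleftrightarrow> (\<exists>M. X = mat_class n q M \<and> M \<in> carrier_mat n n \<and> q dvd det M - 1)"
  by (auto simp: SL_mod_def)

lemma SL_mod_one: "\<one>\<^bsub>SL_mod n q\<^esub> = mat_class n q (1\<^sub>m n)"
  by (simp add: SL_mod_def)

lemma SL_mod_carrier_det:
  assumes "M \<in> carrier_mat n n" "mat_class n q M \<in> carrier (SL_mod n q)"
  shows "q dvd det M - 1"
proof -
  obtain N where N: "mat_class n q M = mat_class n q N" "N \<in> carrier_mat n n" "q dvd det N - 1"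
    using assms(2) unfolding SL_mod_carrier_iff by blast
  then have "cong_mat q N M"
    using assms(1) mat_class_eq_iff cong_mat_sym by blast
  then have "q dvd det N - det M"
    using assms(1) N(2) by (intro cong_mat_det)
  then have "q dvd (det N - 1) - (det N - det M)" using N(3) by (rule dvd_diff[rotated])
  then show ?thesis by simp
qed

lemma dvd_mult_minus_one:
  fixes q :: "'a::comm_ring_1"
  assumes "q dvd a - 1" "q dvd b - 1"
  shows "q dvd a * b - 1"
proof -
  have "q dvd a * (b - 1) + (a - 1)" using assms by (intro dvd_add dvd_mult) auto
  then show ?thesis by (simp add: algebra_simps)
qed

lemma dvd_minus_one_cancel_left:
  fixes q :: "'a::comm_ring_1"
  assumes "q dvd a - 1" "q dvd a * b - 1"
  shows "q dvd b - 1"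
proof -
  have "q dvd (a * b - 1) - (a - 1) * b"
    by (rule dvd_diff[OF assms(2) dvd_mult2[OF assms(1)]])
  then show ?thesis by (simp add: algebra_simps)
qed

lemma monoid_SL_mod: "monoid (SL_mod n q)"
proof (rule monoidI)
  fix x y assume "x \<in> carrier (SL_mod n q)" "y \<in> carrier (SL_mod n q)"
  then obtain A B where "x = mat_class n q A" "A \<in> carrier_mat n n" "q dvd det A - 1"
     "y = mat_class n q B" "B \<in> carrier_mat n n" "q dvd det B - 1"
    unfolding SL_mod_carrier_iff by blast
  then show "x \<otimes>\<^bsub>SL_mod n q\<^esub> y \<in> carrier (SL_mod n q)"
    unfolding SL_mod_carrier_iff
    by (intro exI[of _ "A * B"]) (auto simp: SL_mod_mult_class det_mult dvd_mult_minus_one)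
next
  show "\<one>\<^bsub>SL_mod n q\<^esub> \<in> carrier (SL_mod n q)" unfolding SL_mod_carrier_iff SL_mod_one by auto
next
  fix x y z assume "x \<in> carrier (SL_mod n q)" "y \<in> carrier (SL_mod n q)" "z \<in> carrier (SL_mod n q)"
  then obtain A B C where "x = mat_class n q A" "A \<in> carrier_mat n n" "y = mat_class n q B"
     "B \<in> carrier_mat n n" "z = mat_class n q C" "C \<in> carrier_mat n n"
    unfolding SL_mod_carrier_iff by blast
  then show "x \<otimes>\<^bsub>SL_mod n q\<^esub> y \<otimes>\<^bsub>SL_mod n q\<^esub> z = x \<otimes>\<^bsub>SL_mod n q\<^esub> (y \<otimes>\<^bsub>SL_mod n q\<^esub> z)"
    by (simp add: SL_mod_mult_class)
next
  fix x assume "x \<in> carrier (SL_mod n q)"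
  then obtain A where "x = mat_class n q A" "A \<in> carrier_mat n n" unfolding SL_mod_carrier_iff by blast
  then show "\<one>\<^bsub>SL_mod n q\<^esub> \<otimes>\<^bsub>SL_mod n q\<^esub> x = x" "x \<otimes>\<^bsub>SL_mod n q\<^esub> \<one>\<^bsub>SL_mod n q\<^esub> = x"
    by (simp_all add: SL_mod_one SL_mod_mult_class)
qed

lemma reduce_mod_class:
  assumes "q' dvd q" "M \<in> carrier_mat n n"
  shows "reduce_mod n q' (mat_class n q M) = mat_class n q' M"
proof -
  let ?N = "SOME N. N \<in> mat_class n q M"
  have "cong_mat q' ?N M"
    using some_in_mat_class(2)[OF assms(2)] assms(1) cong_mat_dvd cong_mat_sym by blast
  then show ?thesis
    unfolding reduce_mod_def using some_in_mat_class(1)[OF assms(2)] assms(2) mat_class_eq_iff by blast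
qed

lemma kernel_reduce_mod_iff:
  assumes "q' dvd q" "M \<in> carrier_mat n n"
  shows "mat_class n q M \<in> kernel (SL_mod n q) (SL_mod n q') (reduce_mod n q') \<longleftrightarrow>
     q dvd det M - 1 \<and> cong_mat q' M (1\<^sub>m n)"
proof -
  have "mat_class n q M \<in> kernel (SL_mod n q) (SL_mod n q') (reduce_mod n q') \<longleftrightarrow>
      mat_class n q M \<in> carrier (SL_mod n q) \<and> mat_class n q' M = mat_class n q' (1\<^sub>m n)"
    using reduce_mod_class[OF assms] by (simp add: kernel_def SL_mod_one)
  also have "\<dots> \<longleftrightarrow> q dvd det M - 1 \<and> cong_mat q' M (1\<^sub>m n)"
    using SL_mod_carrier_det[OF assms(2)] mat_class_eq_iff[OF assms(2) one_carrier_mat] assms(2)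
    unfolding SL_mod_carrier_iff by blast
  finally show ?thesis .
qed

lemma kernel_reduce_modE:
  assumes "X \<in> kernel (SL_mod n q) (SL_mod n q') (reduce_mod n q')" "q' dvd q"
  obtains M where "X = mat_class n q M" "M \<in> carrier_mat n n" "q dvd det M - 1" "cong_mat q' M (1\<^sub>m n)"
proof -
  obtain M where "X = mat_class n q M" "M \<in> carrier_mat n n"
    using assms(1) unfolding kernel_def SL_mod_carrier_iff by blast
  then show ?thesis using that assms kernel_reduce_mod_iff[OF assms(2)] by blast
qed

lemma one_in_kernel_reduce_mod:
  "q' dvd q \<Longrightarrow> \<one>\<^bsub>SL_mod n q\<^esub> \<in> kernel (SL_mod n q) (SL_mod n q') (reduce_mod n q')"
  using kernel_reduce_mod_iff[of q' q "1\<^sub>m n" n] by (simp add: SL_mod_one cong_mat_refl)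

lemma kernel_reduce_mod_mult:
  assumes "q' dvd q"
    and "X \<in> kernel (SL_mod n q) (SL_mod n q') (reduce_mod n q')"
    and "Y \<in> kernel (SL_mod n q) (SL_mod n q') (reduce_mod n q')"
  shows "X \<otimes>\<^bsub>SL_mod n q\<^esub> Y \<in> kernel (SL_mod n q) (SL_mod n q') (reduce_mod n q')"
proof -
  obtain A where A: "X = mat_class n q A" "A \<in> carrier_mat n n" "q dvd det A - 1" "cong_mat q' A (1\<^sub>m n)"
    using kernel_reduce_modE[OF assms(2,1)] by blast
  obtain B where B: "Y = mat_class n q B" "B \<in> carrier_mat n n" "q dvd det B - 1" "cong_mat q' B (1\<^sub>m n)"
    using kernel_reduce_modE[OF assms(3,1)] by blast
  have "cong_mat q' (A * B) (1\<^sub>m n * 1\<^sub>m n)"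
    using A B by (intro cong_mat_mult[of _ n n _ _ n]) auto
  moreover have "q dvd det (A * B) - 1" using A B by (simp add: det_mult dvd_mult_minus_one)
  ultimately show ?thesis
    using A B kernel_reduce_mod_iff[OF assms(1), of "A * B" n] by (simp add: SL_mod_mult_class)
qed

subsection \<open>The matrices e_ij and e_ii - e_nn\<close>

definition sl_index :: "nat \<Rightarrow> (nat \<times> nat) set" where
  "sl_index n = {(i,j). i < n \<and> j < n \<and> \<not> (i = n-1 \<and> j = n-1)}"

definition sl_basis :: "nat \<Rightarrow> nat \<Rightarrow> nat \<Rightarrow> 'a::comm_ring_1 mat" where
  "sl_basis n i j = (if i \<noteq> j then elem_mat n i j else elem_mat n i i - elem_mat n (n-1) (n-1))"

definition mat_trace :: "'a::comm_ring_1 mat \<Rightarrow> 'a" where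
  "mat_trace A = (\<Sum>i = 0..<dim_row A. A $$ (i,i))"

lemma elem_mat_dim [simp]: "dim_row (elem_mat n i j) = n" "dim_col (elem_mat n i j) = n"
  by (simp_all add: elem_mat_def)

lemma finite_sl_index: "finite (sl_index n)"
  by (rule finite_subset[of _ "{0..<n} \<times> {0..<n}"]) (auto simp: sl_index_def)

lemma sl_basis_carrier [simp]: "sl_basis n i j \<in> carrier_mat n n"
  by (simp add: sl_basis_def elem_mat_def minus_carrier_mat)

lemma sl_basis_dim [simp]: "dim_row (sl_basis n i j) = n" "dim_col (sl_basis n i j) = n"
  using sl_basis_carrier[of n i j] unfolding carrier_mat_def by auto

lemma sl_basis_entry:
  "a < n \<Longrightarrow> b < n \<Longrightarrow> sl_basis n c d $$ (a,b) =
    (if (a,b) = (c,d) then 1 else 0) - (if c = d \<and> a = n-1 \<and> b = n-1 then 1 else 0)"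
  by (auto simp: sl_basis_def elem_mat_def)

lemma A_mat_sl_basis: "A_mat n p r x i j = 1\<^sub>m n + (of_nat p ^ r) \<cdot>\<^sub>m (x \<cdot>\<^sub>m sl_basis n i j)"
  unfolding A_mat_def by (rule eq_matI) (auto simp: sl_basis_def elem_mat_def)

lemma det_triangular_diag:
  assumes "A \<in> carrier_mat n n"
    and "(\<forall>a b. b < a \<longrightarrow> a < n \<longrightarrow> A $$ (a,b) = 0) \<or> (\<forall>a b. a < b \<longrightarrow> b < n \<longrightarrow> A $$ (a,b) = 0)"
  shows "det A = (\<Prod>b = 0..<n. A $$ (b,b))"
  using assms(2)
proof
  assume "\<forall>a b. b < a \<longrightarrow> a < n \<longrightarrow> A $$ (a,b) = 0"
  then have "upper_triangular A" using assms(1) unfolding upper_triangular_def by auto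
  then show ?thesis using det_upper_triangular[OF _ assms(1)] prod_list_diag_prod assms(1) by auto
next
  assume "\<forall>a b. a < b \<longrightarrow> b < n \<longrightarrow> A $$ (a,b) = 0"
  then show ?thesis using det_lower_triangular[OF _ assms(1)] prod_list_diag_prod assms(1) by auto
qed

lemma det_one_plus_sl_basis:
  assumes "(i,j) \<in> sl_index n"
  shows "det (1\<^sub>m n + c \<cdot>\<^sub>m sl_basis n i j) = (if i \<noteq> j then 1 else (1 + c) * (1 - c))"
proof -
  let ?A = "1\<^sub>m n + c \<cdot>\<^sub>m sl_basis n i j"
  have ij: "i < n" "j < n" "\<not> (i = n-1 \<and> j = n-1)" using assms by (auto simp: sl_index_def)
  have "(\<forall>a b. b < a \<longrightarrow> a < n \<longrightarrow> ?A $$ (a,b) = 0) \<or> (\<forall>a b. a < b \<longrightarrow> b < n \<longrightarrow> ?A $$ (a,b) = 0)"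
  proof (cases "i \<le> j")
    case True
    have "?A $$ (a,b) = 0" if "b < a" "a < n" for a b
      using that True by (auto simp: sl_basis_entry)
    then show ?thesis by blast
  next
    case False
    have "?A $$ (a,b) = 0" if "a < b" "b < n" for a b
      using that False by (auto simp: sl_basis_entry)
    then show ?thesis by blast
  qed
  then have "det ?A = (\<Prod>b = 0..<n. ?A $$ (b,b))" by (intro det_triangular_diag) simp_all
  also have "\<dots> = (\<Prod>b = 0..<n. if i \<noteq> j then 1 else (if b = i then 1 + c else 1) * (if b = n - 1 then 1 - c else 1))"
    using ij by (intro prod.cong) (auto simp: sl_basis_entry)
  also have "\<dots> = (if i \<noteq> j then 1 else (1 + c) * (1 - c))"
    using ij by (auto simp: prod.distrib)
  finally show ?thesis .
qed

lemma det_one_plus_corner: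
  assumes "n > 0"
  shows "det (1\<^sub>m n + c \<cdot>\<^sub>m elem_mat n (n-1) (n-1)) = 1 + c"
proof -
  let ?A = "1\<^sub>m n + c \<cdot>\<^sub>m elem_mat n (n-1) (n-1)"
  have "?A $$ (a,b) = 0" if "b < a" "a < n" for a b
    using that by (auto simp: elem_mat_def)
  then have "det ?A = (\<Prod>b = 0..<n. ?A $$ (b,b))"
    by (intro det_triangular_diag) (auto simp: elem_mat_def)
  also have "\<dots> = (\<Prod>b = 0..<n. if b = n - 1 then 1 + c else 1)"
    by (intro prod.cong) (auto simp: elem_mat_def)
  finally show ?thesis using assms by simp
qed

lemma trace_minus_corner:
  assumes "0 < n" "Y \<in> carrier_mat n n"
  shows "mat_trace (Y - mat_trace Y \<cdot>\<^sub>m elem_mat n (n-1) (n-1)) = 0"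
proof -
  let ?t = "mat_trace Y"
  have "mat_trace (Y - ?t \<cdot>\<^sub>m elem_mat n (n-1) (n-1)) = (\<Sum>i = 0..<n. Y $$ (i,i) - (if i = n-1 then ?t else 0))"
    using assms(2) unfolding mat_trace_def by (intro sum.cong) (auto simp: elem_mat_def)
  also have "\<dots> = 0"
    using assms by (simp add: sum_subtractf mat_trace_def)
  finally show ?thesis .
qed

lemma trace_zero_sl_expansion:
  assumes Y: "Y \<in> carrier_mat n n" and tr: "mat_trace Y = 0"
  shows "Y = mat n n (\<lambda>ab. \<Sum>s\<in>sl_index n. (Y $$ s \<cdot>\<^sub>m sl_basis n (fst s) (snd s)) $$ ab)"
proof (rule eq_matI)
  fix a b assume "a < dim_row (mat n n (\<lambda>ab. \<Sum>s\<in>sl_index n. (Y $$ s \<cdot>\<^sub>m sl_basis n (fst s) (snd s)) $$ ab))"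
    and "b < dim_col (mat n n (\<lambda>ab. \<Sum>s\<in>sl_index n. (Y $$ s \<cdot>\<^sub>m sl_basis n (fst s) (snd s)) $$ ab))"
  then have ab: "a < n" "b < n" by auto
  let ?S = "sl_index n"
  have "(\<Sum>s\<in>?S. if fst s = snd s then Y $$ s else 0) = (\<Sum>c = 0..<n-1. Y $$ (c,c))"
  proof -
    have "{s \<in> ?S. fst s = snd s} = (\<lambda>c. (c,c)) ` {0..<n-1}"
      by (auto simp: sl_index_def)
    then show ?thesis
      by (simp add: sum.inter_filter[symmetric] finite_sl_index sum.reindex inj_on_def)
  qed
  also have "\<dots> = mat_trace Y - Y $$ (n-1, n-1)"
  proof -
    have "{0..<n} = insert (n-1) {0..<n-1}" using ab by auto
    then show ?thesis using Y by (simp add: mat_trace_def)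
  qed
  finally have diag: "(\<Sum>s\<in>?S. if fst s = snd s then Y $$ s else 0) = - Y $$ (n-1, n-1)"
    using tr by simp
  have "(\<Sum>s\<in>?S. (Y $$ s \<cdot>\<^sub>m sl_basis n (fst s) (snd s)) $$ (a,b)) =
      (\<Sum>s\<in>?S. (if s = (a,b) then Y $$ s else 0) -
         (if a = n-1 \<and> b = n-1 then (if fst s = snd s then Y $$ s else 0) else 0))"
    using ab by (intro sum.cong) (auto simp: sl_basis_entry)
  also have "\<dots> = Y $$ (a,b)"
  proof (cases "a = n-1 \<and> b = n-1")
    case True
    then have "(a,b) \<notin> ?S" by (simp add: sl_index_def)
    then show ?thesis using True diag by (simp add: sum_subtractf finite_sl_index)
  next
    case False
    then have "(a,b) \<in> ?S" using ab by (simp add: sl_index_def)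
    moreover have "(if a = n-1 \<and> b = n-1 then f else 0) = 0" for f :: 'a
      using False by auto
    ultimately show ?thesis by (simp add: sum_subtractf finite_sl_index)
  qed
  finally show "Y $$ (a,b) = mat n n (\<lambda>ab. \<Sum>s\<in>?S. (Y $$ s \<cdot>\<^sub>m sl_basis n (fst s) (snd s)) $$ ab) $$ (a,b)"
    using ab by simp
qed (use Y in auto)

subsection \<open>Lifting matrices to the congruence quotient\<close>

lemma smult_sum_mat:
  fixes g :: "'b \<Rightarrow> 'a::comm_ring_1"
  assumes "E \<in> carrier_mat n n"
  shows "(\<Sum>s\<in>S. g s) \<cdot>\<^sub>m E = mat n n (\<lambda>ab. \<Sum>s\<in>S. (g s \<cdot>\<^sub>m E) $$ ab)"
proof (rule eq_matI)
  fix a b assume "a < dim_row (mat n n (\<lambda>ab. \<Sum>s\<in>S. (g s \<cdot>\<^sub>m E) $$ ab))"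
    and "b < dim_col (mat n n (\<lambda>ab. \<Sum>s\<in>S. (g s \<cdot>\<^sub>m E) $$ ab))"
  then show "((\<Sum>s\<in>S. g s) \<cdot>\<^sub>m E) $$ (a,b) = mat n n (\<lambda>ab. \<Sum>s\<in>S. (g s \<cdot>\<^sub>m E) $$ ab) $$ (a,b)"
    using assms sum_distrib_right[of g S "E $$ (a,b)"] by simp
qed (use assms in auto)

lemma smult_smult_mat: "a \<cdot>\<^sub>m (b \<cdot>\<^sub>m A) = (a * b :: 'a::comm_ring_1) \<cdot>\<^sub>m A"
  by (rule eq_matI) auto

lemma one_plus_smult_mult:
  fixes P :: "'a::comm_ring_1"
  assumes Y: "Y \<in> carrier_mat n n" and Z: "Z \<in> carrier_mat n n"
  shows "(1\<^sub>m n + P \<cdot>\<^sub>m Y) * (1\<^sub>m n + P \<cdot>\<^sub>m Z) = (1\<^sub>m n + P \<cdot>\<^sub>m (Y + Z)) + (P * P) \<cdot>\<^sub>m (Y * Z)"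
proof -
  have "(1\<^sub>m n + P \<cdot>\<^sub>m Y) * (1\<^sub>m n + P \<cdot>\<^sub>m Z) = 1\<^sub>m n * (1\<^sub>m n + P \<cdot>\<^sub>m Z) + P \<cdot>\<^sub>m Y * (1\<^sub>m n + P \<cdot>\<^sub>m Z)"
    using Y Z by (intro add_mult_distrib_mat) auto
  also have "P \<cdot>\<^sub>m Y * (1\<^sub>m n + P \<cdot>\<^sub>m Z) = P \<cdot>\<^sub>m Y * 1\<^sub>m n + P \<cdot>\<^sub>m Y * (P \<cdot>\<^sub>m Z)"
    using Y Z by (intro mult_add_distrib_mat) auto
  also have "P \<cdot>\<^sub>m Y * (P \<cdot>\<^sub>m Z) = (P * P) \<cdot>\<^sub>m (Y * Z)"
  proof -
    have "P \<cdot>\<^sub>m Y * (P \<cdot>\<^sub>m Z) = P \<cdot>\<^sub>m (Y * (P \<cdot>\<^sub>m Z))"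
      using Y Z by (intro mult_smult_assoc_mat) auto
    also have "Y * (P \<cdot>\<^sub>m Z) = P \<cdot>\<^sub>m (Y * Z)"
      using Y Z by (intro mult_smult_distrib)
    finally show ?thesis by (simp add: smult_smult_mat)
  qed
  finally show ?thesis
    using Y Z by (intro eq_matI) (auto simp: algebra_simps)
qed

definition one_plus_class :: "nat \<Rightarrow> 'a::comm_ring_1 \<Rightarrow> 'a \<Rightarrow> 'a mat \<Rightarrow> 'a mat set" where
  "one_plus_class n q P Y = mat_class n q (1\<^sub>m n + P \<cdot>\<^sub>m Y)"

text \<open>P plays the role of p^r and q that of p^(r+1).\<close>

locale congruence_lift =
  fixes n :: nat and P q :: "'a::comm_ring_1"
  assumes P_dvd_q: "P dvd q" and q_dvd_square: "q dvd P * P"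
begin

abbreviation "lift \<equiv> one_plus_class n q P"
abbreviation "SLq \<equiv> SL_mod n q"
abbreviation "level_kernel \<equiv> kernel (SL_mod n q) (SL_mod n P) (reduce_mod n P)"

lemma lift_add:
  assumes "Y \<in> carrier_mat n n" "Z \<in> carrier_mat n n"
  shows "lift Y \<otimes>\<^bsub>SLq\<^esub> lift Z = lift (Y + Z)"
  unfolding one_plus_class_def using assms
  by (simp add: SL_mod_mult_class one_plus_smult_mult mat_class_eq_iff)
    (intro cong_mat_add_smult, auto simp: q_dvd_square)

lemma lift_zero: "lift (0\<^sub>m n n) = \<one>\<^bsub>SLq\<^esub>"
proof -
  have "1\<^sub>m n + P \<cdot>\<^sub>m 0\<^sub>m n n = 1\<^sub>m n" by (rule eq_matI) auto
  then show ?thesis by (simp add: one_plus_class_def SL_mod_one)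
qed

lemma lift_eqI:
  assumes "Y \<in> carrier_mat n n" "Z \<in> carrier_mat n n" "cong_mat q (P \<cdot>\<^sub>m Y) (P \<cdot>\<^sub>m Z)"
  shows "lift Y = lift Z"
proof -
  have "cong_mat q (1\<^sub>m n + P \<cdot>\<^sub>m Y) (1\<^sub>m n + P \<cdot>\<^sub>m Z)"
    using assms unfolding cong_mat_def by (auto simp: diff_add_eq_diff_diff_swap)
  then show ?thesis
    unfolding one_plus_class_def using assms by (simp add: mat_class_eq_iff)
qed

lemma lift_in_kernel_iff:
  assumes "Y \<in> carrier_mat n n"
  shows "lift Y \<in> level_kernel \<longleftrightarrow> q dvd det (1\<^sub>m n + P \<cdot>\<^sub>m Y) - 1"
proof -
  have "cong_mat P (1\<^sub>m n + P \<cdot>\<^sub>m Y) (1\<^sub>m n)"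
    using assms by (intro cong_mat_add_smult) auto
  then show ?thesis
    unfolding one_plus_class_def using assms kernel_reduce_mod_iff[OF P_dvd_q] by simp
qed

lemma level_kernelE:
  assumes "X \<in> level_kernel"
  obtains Y where "Y \<in> carrier_mat n n" "X = lift Y"
proof -
  obtain M where M: "X = mat_class n q M" "M \<in> carrier_mat n n" "cong_mat P M (1\<^sub>m n)"
    using kernel_reduce_modE[OF assms P_dvd_q] by blast
  define Y where "Y = mat n n (\<lambda>ab. SOME y. M $$ ab - 1\<^sub>m n $$ ab = P * y)"
  have "M $$ (a,b) - 1\<^sub>m n $$ (a,b) = P * Y $$ (a,b)" if "a < n" "b < n" for a b
  proof -
    have "P dvd M $$ (a,b) - 1\<^sub>m n $$ (a,b)" using M(2,3) that unfolding cong_mat_def by auto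
    then show ?thesis
      using that by (auto simp: Y_def elim!: dvdE intro: someI)
  qed
  then have "M = 1\<^sub>m n + P \<cdot>\<^sub>m Y"
    using M(2) by (intro eq_matI) (auto simp: Y_def algebra_simps)
  then show ?thesis
    using that[of Y] M(1) by (simp add: Y_def one_plus_class_def)
qed

lemma lift_sl_basis_in_kernel:
  assumes "(i,j) \<in> sl_index n"
  shows "lift (x \<cdot>\<^sub>m sl_basis n i j) \<in> level_kernel"
proof -
  have "q dvd P * P * (- x * x)" using q_dvd_square by (simp add: dvd_mult2)
  moreover have "(1 + P * x) * (1 - P * x) - 1 = P * P * (- x * x)" by (simp add: algebra_simps)
  ultimately have "q dvd det (1\<^sub>m n + (P * x) \<cdot>\<^sub>m sl_basis n i j) - 1"
    using det_one_plus_sl_basis[OF assms, of "P * x"] by auto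
  then show ?thesis by (simp add: lift_in_kernel_iff smult_smult_mat)
qed

lemma inv_lift:
  assumes "Y \<in> carrier_mat n n" "Z \<in> carrier_mat n n" "Y + Z = 0\<^sub>m n n"
    and "lift Y \<in> carrier SLq" "lift Z \<in> carrier SLq"
  shows "inv\<^bsub>SLq\<^esub> (lift Y) = lift Z"
proof -
  have YZ: "lift Y \<otimes>\<^bsub>SLq\<^esub> lift Z = \<one>\<^bsub>SLq\<^esub>"
    using assms by (simp add: lift_add lift_zero)
  have ZY: "lift Z \<otimes>\<^bsub>SLq\<^esub> lift Y = \<one>\<^bsub>SLq\<^esub>"
    using assms by (simp add: lift_add lift_zero comm_add_mat[of Z n n Y])
  show ?thesis
    unfolding m_inv_def
  proof (rule the_equality)
    fix W assume "W \<in> carrier SLq \<and> lift Y \<otimes>\<^bsub>SLq\<^esub> W = \<one>\<^bsub>SLq\<^esub> \<and> W \<otimes>\<^bsub>SLq\<^esub> lift Y = \<one>\<^bsub>SLq\<^esub>"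
    then show "W = lift Z"
      using monoid.inv_unique[OF monoid_SL_mod[of n q], of W "lift Y" "lift Z"] assms(4,5) YZ by auto
  qed (use assms(5) YZ ZY in auto)
qed

lemma generate_subset_level_kernel:
  "generate SLq {lift (v k \<cdot>\<^sub>m sl_basis n i j) | i j k. (i,j) \<in> sl_index n \<and> k \<in> I} \<subseteq> level_kernel"
proof
  fix X assume "X \<in> generate SLq {lift (v k \<cdot>\<^sub>m sl_basis n i j) | i j k. (i,j) \<in> sl_index n \<and> k \<in> I}"
  then show "X \<in> level_kernel"
  proof (induction rule: generate.induct)
    case one
    show ?case using one_in_kernel_reduce_mod[OF P_dvd_q] .
  next
    case (incl h)
    then show ?case using lift_sl_basis_in_kernel by auto
  next
    case (inv h)
    then obtain i j k where h: "h = lift (v k \<cdot>\<^sub>m sl_basis n i j)" and ij: "(i,j) \<in> sl_index n"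
      by auto
    have "v k \<cdot>\<^sub>m sl_basis n i j + (- v k) \<cdot>\<^sub>m sl_basis n i j = 0\<^sub>m n n"
      by (rule eq_matI) (auto simp: algebra_simps)
    then have "inv\<^bsub>SLq\<^esub> h = lift ((- v k) \<cdot>\<^sub>m sl_basis n i j)"
      unfolding h using lift_sl_basis_in_kernel[OF ij] by (intro inv_lift) (auto simp: kernel_def)
    then show ?case using lift_sl_basis_in_kernel[OF ij] by simp
  next
    case (eng h1 h2)
    then show ?case using kernel_reduce_mod_mult[OF P_dvd_q] by auto
  qed
qed

lemma lift_sum_in_generate:
  assumes "finite S" "\<And>s. s \<in> S \<Longrightarrow> f s \<in> carrier_mat n n"
    and "\<And>s. s \<in> S \<Longrightarrow> lift (f s) \<in> generate SLq H"
  shows "lift (mat n n (\<lambda>ab. \<Sum>s\<in>S. f s $$ ab)) \<in> generate SLq H"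
  using assms
proof (induction S rule: finite_induct)
  case empty
  have "mat n n (\<lambda>ab. \<Sum>s\<in>{}. f s $$ ab) = 0\<^sub>m n n" by (rule eq_matI) auto
  then show ?case using lift_zero generate.one by metis
next
  case (insert s S)
  have "mat n n (\<lambda>ab. \<Sum>t\<in>insert s S. f t $$ ab) = f s + mat n n (\<lambda>ab. \<Sum>t\<in>S. f t $$ ab)"
    using insert by (intro eq_matI) auto
  then have "lift (mat n n (\<lambda>ab. \<Sum>t\<in>insert s S. f t $$ ab)) =
      lift (f s) \<otimes>\<^bsub>SLq\<^esub> lift (mat n n (\<lambda>ab. \<Sum>t\<in>S. f t $$ ab))"
    using insert by (simp add: lift_add)
  then show ?case using insert by (simp add: generate.eng)
qed

lemma lift_nat_multiple_in_generate:
  assumes "E \<in> carrier_mat n n" "lift (x \<cdot>\<^sub>m E) \<in> generate SLq H"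
  shows "lift ((of_nat m * x) \<cdot>\<^sub>m E) \<in> generate SLq H"
proof -
  have "lift (mat n n (\<lambda>ab. \<Sum>_\<in>{..<m}. (x \<cdot>\<^sub>m E) $$ ab)) \<in> generate SLq H"
    using assms by (intro lift_sum_in_generate) auto
  moreover have "(of_nat m * x) \<cdot>\<^sub>m E = mat n n (\<lambda>ab. \<Sum>_\<in>{..<m}. (x \<cdot>\<^sub>m E) $$ ab)"
    using smult_sum_mat[OF assms(1), of "\<lambda>_. x" "{..<m}"] by simp
  ultimately show ?thesis by simp
qed

text \<open>Integer multiples reduce to natural ones, since lift (x E) only depends on x modulo m.\<close>

lemma lift_int_multiple_in_generate:
  assumes E: "E \<in> carrier_mat n n" and gen: "lift (x \<cdot>\<^sub>m E) \<in> generate SLq H"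
    and m: "q dvd P * of_nat m" "0 < m"
  shows "lift ((of_int c * x) \<cdot>\<^sub>m E) \<in> generate SLq H"
proof -
  define k where "k = nat (c mod int m)"
  have "c = int m * (c div int m) + int k" using m(2) by (simp add: k_def)
  then have "(of_int c :: 'a) = of_nat m * of_int (c div int m) + of_nat k"
    by (metis of_int_add of_int_mult of_int_of_nat_eq)
  then have "P * (of_int c * x * e) - P * (of_nat k * x * e) = P * of_nat m * (of_int (c div int m) * x * e)"
    for e by (simp add: algebra_simps)
  then have "cong_mat q (P \<cdot>\<^sub>m ((of_int c * x) \<cdot>\<^sub>m E)) (P \<cdot>\<^sub>m ((of_nat k * x) \<cdot>\<^sub>m E))"
    using E m(1) unfolding cong_mat_def by (auto intro: dvd_mult2)
  then have "lift ((of_int c * x) \<cdot>\<^sub>m E) = lift ((of_nat k * x) \<cdot>\<^sub>m E)"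
    using E by (intro lift_eqI) auto
  then show ?thesis using lift_nat_multiple_in_generate[OF E gen] by simp
qed

lemma lift_span_in_generate:
  assumes "Z_basis I v" and E: "E \<in> carrier_mat n n"
    and gen: "\<And>k. k \<in> I \<Longrightarrow> lift (v k \<cdot>\<^sub>m E) \<in> generate SLq H"
    and m: "q dvd P * of_nat m" "0 < m"
  shows "lift (x \<cdot>\<^sub>m E) \<in> generate SLq H"
proof -
  obtain c where c: "finite {k. c k \<noteq> 0}" "{k. c k \<noteq> 0} \<subseteq> I"
    and x: "x = (\<Sum>k\<in>{k. c k \<noteq> 0}. of_int (c k) * v k)"
    using assms(1) unfolding Z_basis_def by blast
  have "x \<cdot>\<^sub>m E = mat n n (\<lambda>ab. \<Sum>k\<in>{k. c k \<noteq> 0}. ((of_int (c k) * v k) \<cdot>\<^sub>m E) $$ ab)"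
    unfolding x by (rule smult_sum_mat[OF E])
  moreover have "lift ((of_int (c k) * v k) \<cdot>\<^sub>m E) \<in> generate SLq H" if "k \<in> {k. c k \<noteq> 0}" for k
    using that c(2) by (intro lift_int_multiple_in_generate[OF E gen m]) auto
  ultimately show ?thesis
    using c(1) E lift_sum_in_generate[of "{k. c k \<noteq> 0}" "\<lambda>k. (of_int (c k) * v k) \<cdot>\<^sub>m E" H]
    by simp
qed

lemma lift_trace_zero_in_generate:
  assumes "Y \<in> carrier_mat n n" "mat_trace Y = 0"
    and gen: "\<And>x i j. (i,j) \<in> sl_index n \<Longrightarrow> lift (x \<cdot>\<^sub>m sl_basis n i j) \<in> generate SLq H"
  shows "lift Y \<in> generate SLq H"
proof -
  have "lift (mat n n (\<lambda>ab. \<Sum>s\<in>sl_index n. (Y $$ s \<cdot>\<^sub>m sl_basis n (fst s) (snd s)) $$ ab))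
      \<in> generate SLq H"
    using gen by (intro lift_sum_in_generate) (auto simp: finite_sl_index)
  then show ?thesis using trace_zero_sl_expansion[OF assms(1,2)] by simp
qed

text \<open>The determinant condition forces q | P t, so the factor 1 + P t e_nn is trivial.\<close>

lemma lift_add_corner:
  assumes "0 < n" "Y \<in> carrier_mat n n" "lift Y \<in> level_kernel"
    and "lift (Y + t \<cdot>\<^sub>m elem_mat n (n-1) (n-1)) \<in> level_kernel"
  shows "lift (Y + t \<cdot>\<^sub>m elem_mat n (n-1) (n-1)) = lift Y"
proof -
  let ?E = "elem_mat n (n-1) (n-1) :: 'a mat"
  define A where "A = 1\<^sub>m n + P \<cdot>\<^sub>m Y"
  define B where "B = 1\<^sub>m n + P \<cdot>\<^sub>m (t \<cdot>\<^sub>m ?E)"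
  have E: "t \<cdot>\<^sub>m ?E \<in> carrier_mat n n" by (simp add: elem_mat_def)
  have A: "A \<in> carrier_mat n n" and B: "B \<in> carrier_mat n n"
    using assms(2) E by (simp_all add: A_def B_def)
  have split: "lift (Y + t \<cdot>\<^sub>m ?E) = lift Y \<otimes>\<^bsub>SLq\<^esub> lift (t \<cdot>\<^sub>m ?E)"
    using assms(2) E by (simp add: lift_add)
  also have "\<dots> = mat_class n q (A * B)"
    using A B by (simp add: one_plus_class_def SL_mod_mult_class A_def B_def)
  finally have "mat_class n q (A * B) \<in> carrier SLq"
    using assms(4) by (simp add: kernel_def)
  then have "q dvd det A * det B - 1"
    using SL_mod_carrier_det[OF mult_carrier_mat[OF A B]] det_mult[OF A B] by simp
  moreover have "q dvd det A - 1"
    using assms(2,3) lift_in_kernel_iff by (simp add: A_def)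
  ultimately have "q dvd det B - 1"
    by (rule dvd_minus_one_cancel_left[rotated])
  moreover have "det B = 1 + P * t"
    using det_one_plus_corner[OF assms(1)] by (simp add: B_def smult_smult_mat)
  ultimately have "q dvd P * t"
    by simp
  then have "cong_mat q (P \<cdot>\<^sub>m (t \<cdot>\<^sub>m ?E)) (P \<cdot>\<^sub>m 0\<^sub>m n n)"
    unfolding cong_mat_def smult_smult_mat by (auto simp: elem_mat_def)
  then have "lift (t \<cdot>\<^sub>m ?E) = \<one>\<^bsub>SLq\<^esub>"
    using E lift_eqI lift_zero by (metis zero_carrier_mat)
  then show ?thesis
    using split assms(3) monoid.r_one[OF monoid_SL_mod[of n q]] by (simp add: kernel_def)
qed

lemma level_kernel_subset_generate:
  assumes "0 < n" "Z_basis I v" "q dvd P * of_nat m" "0 < m"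
  shows "level_kernel \<subseteq> generate SLq {lift (v k \<cdot>\<^sub>m sl_basis n i j) | i j k. (i,j) \<in> sl_index n \<and> k \<in> I}"
    (is "_ \<subseteq> generate SLq ?H")
proof
  fix X assume X: "X \<in> level_kernel"
  then obtain Y where Y: "Y \<in> carrier_mat n n" "X = lift Y" by (rule level_kernelE)
  let ?E = "elem_mat n (n-1) (n-1) :: 'a mat"
  define t where "t = mat_trace Y"
  define Y0 where "Y0 = Y - t \<cdot>\<^sub>m ?E"
  have Y0: "Y0 \<in> carrier_mat n n" and "Y = Y0 + t \<cdot>\<^sub>m ?E"
    using Y(1) unfolding Y0_def by (auto intro!: eq_matI)
  then have X_eq: "X = lift (Y0 + t \<cdot>\<^sub>m ?E)"
    using Y(2) by simp
  have trace: "mat_trace Y0 = 0"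
    using trace_minus_corner[OF assms(1) Y(1)] by (simp add: Y0_def t_def)
  have gens: "lift (v k \<cdot>\<^sub>m sl_basis n i j) \<in> generate SLq ?H" if "(i,j) \<in> sl_index n" "k \<in> I" for i j k
    using that by (intro generate.incl) blast
  have "lift (x \<cdot>\<^sub>m sl_basis n i j) \<in> generate SLq ?H" if ij: "(i,j) \<in> sl_index n" for x i j
    using assms(2) sl_basis_carrier gens[OF ij] assms(3,4) by (rule lift_span_in_generate)
  then have gen: "lift Y0 \<in> generate SLq ?H"
    by (rule lift_trace_zero_in_generate[OF Y0 trace])
  then have "lift Y0 \<in> level_kernel"
    by (rule subsetD[OF generate_subset_level_kernel])
  then have "lift (Y0 + t \<cdot>\<^sub>m ?E) = lift Y0"
    using X X_eq by (intro lift_add_corner[OF assms(1) Y0]) simp_all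
  then show "X \<in> generate SLq ?H"
    using gen X_eq by simp
qed

end

theorem corollary3p8:
  fixes v :: "'i \<Rightarrow> 'a::comm_ring_1" and I :: "'i set" and n p r :: nat
  assumes "Z_basis I v" and "n \<ge> 2" and "prime p" and "r \<ge> 1"
  shows "generate (SL_mod n ((of_nat p :: 'a) ^ (r+1)))
           {mat_class n ((of_nat p :: 'a) ^ (r+1)) (A_mat n p r (v k) i j) | i j k.
              i < n \<and> j < n \<and> \<not> (i = n-1 \<and> j = n-1) \<and> k \<in> I}
         = kernel (SL_mod n ((of_nat p :: 'a) ^ (r+1))) (SL_mod n ((of_nat p :: 'a) ^ r))
             (reduce_mod n ((of_nat p :: 'a) ^ r))"
proof -
  let ?P = "(of_nat p :: 'a) ^ r" and ?q = "(of_nat p :: 'a) ^ (r+1)"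
  have "?q dvd (of_nat p) ^ (r + r)"
    using assms(4) by (intro le_imp_power_dvd) simp
  then have "?q dvd ?P * ?P"
    by (simp only: power_add)
  then interpret congruence_lift n ?P ?q
    by unfold_locales (simp add: power_Suc2)
  have gens: "{mat_class n ?q (A_mat n p r (v k) i j) | i j k.
        i < n \<and> j < n \<and> \<not> (i = n-1 \<and> j = n-1) \<and> k \<in> I} =
      {lift (v k \<cdot>\<^sub>m sl_basis n i j) | i j k. (i,j) \<in> sl_index n \<and> k \<in> I}"
    by (simp add: A_mat_sl_basis one_plus_class_def sl_index_def)
  have "level_kernel \<subseteq> generate SLq {lift (v k \<cdot>\<^sub>m sl_basis n i j) | i j k. (i,j) \<in> sl_index n \<and> k \<in> I}"
    using assms(1,2,3) by (intro level_kernel_subset_generate[of I v p]) (auto simp: mult.commute prime_gt_0_nat)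
  then show ?thesis
    unfolding gens using generate_subset_level_kernel by blast
qed

end
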